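(* Let $\mathcal{C}$ be a category and $A$ an object of $\mathcal{C}$ satisfying the axioms RC0, RC1, RC2 below, and let $G=\mathrm{Aut}(A)^{op}$. Then for every object $X$ the set $[A,X]$ with the left $G$-action $g\cdot x=x\circ g$ is a transitive $G$-set, giving a functor $[A,-]_G\colon\mathcal{C}\to t\mathcal{E}ns^G$. This functor has a left adjoint $A\times_G(-)$, given on a transitive $G$-set $E$ by $A\times_G E=A/H$ where $H=\mathrm{Fix}(x_0)=\{g: g\cdot x_0=x_0\}$ for any chosen $x_0\in E$; the unit $E\cong[A,A]/H\to[A,A/H]$ and the counit $A/\mathrm{Fix}(x)\to X$ (for $x\in[A,X]$) are isomorphisms. Hence $[A,-]_G$ and $A\times_G(-)$ establish an equivalence of categories $\mathcal{C}\simeq t\mathcal{E}ns^G$.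
   Context: $t\mathcal{E}ns^G$ denotes the category of transitive (left) $G$-sets with equivariant maps. An arrow $f\colon X\to Y$ is a strict epimorphism if for every arrow $g\colon X\to Z$ compatible with $f$ (for every object $C$ and all $u,v\colon C\to X$ with $f\circ u=f\circ v$ one has $g\circ u=g\circ v$) there is a unique $k\colon Y\to Z$ with $g=k\circ f$. For a group $H$ acting on $A$ by automorphisms (a homomorphism $H\to\mathrm{Aut}(A)^{op}$), the quotient $q\colon A\to A/H$ is an arrow with $q\circ h=q$ for all $h\in H$, universal among such arrows. Axioms: RC0: for every object $X$ there exists an arrow $A\to X$, and every arrow $A\to X$ is a strict epimorphism. RC1: for every subgroup $H\subseteq\mathrm{Aut}(A)$ the quotient $q\colon A\to A/H$ exists and the map $[A,A]\to[A,A/H]$, $f\mapsto q\circ f$, is surjective with $q\circ f=q\circ g$ iff $f=h\circ g$ for some $h\in H$. RC2: $[A,A]=\mathrm{Aut}(A)$. *)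

theory Defs
  imports "HOL-Library.FuncSet"
begin

text \<open>A category is given by hom-sets Hom X Y (arrows of type 'a between objects of
  type 'o), composition cmp g f (= g \<circ> f, first f then g) and identities idt X.\<close>

definition category :: "('o \<Rightarrow> 'o \<Rightarrow> 'a set) \<Rightarrow> ('a \<Rightarrow> 'a \<Rightarrow> 'a) \<Rightarrow> ('o \<Rightarrow> 'a) \<Rightarrow> bool" where
  "category Hom cmp idt \<longleftrightarrow>
     (\<forall>X. idt X \<in> Hom X X) \<and>
     (\<forall>X Y Z f g. f \<in> Hom X Y \<longrightarrow> g \<in> Hom Y Z \<longrightarrow> cmp g f \<in> Hom X Z) \<and>
     (\<forall>X Y f. f \<in> Hom X Y \<longrightarrow> cmp (idt Y) f = f \<and> cmp f (idt X) = f) \<and>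
     (\<forall>W X Y Z f g h. f \<in> Hom W X \<longrightarrow> g \<in> Hom X Y \<longrightarrow> h \<in> Hom Y Z \<longrightarrow>
        cmp h (cmp g f) = cmp (cmp h g) f) \<and>
     (\<forall>X Y X' Y' f. f \<in> Hom X Y \<longrightarrow> f \<in> Hom X' Y' \<longrightarrow> X = X' \<and> Y = Y')"

definition is_iso :: "('o \<Rightarrow> 'o \<Rightarrow> 'a set) \<Rightarrow> ('a \<Rightarrow> 'a \<Rightarrow> 'a) \<Rightarrow> ('o \<Rightarrow> 'a) \<Rightarrow> 'o \<Rightarrow> 'o \<Rightarrow> 'a \<Rightarrow> bool" where
  "is_iso Hom cmp idt X Y f \<longleftrightarrow> f \<in> Hom X Y \<and>
     (\<exists>g \<in> Hom Y X. cmp g f = idt X \<and> cmp f g = idt Y)"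

definition Aut :: "('o \<Rightarrow> 'o \<Rightarrow> 'a set) \<Rightarrow> ('a \<Rightarrow> 'a \<Rightarrow> 'a) \<Rightarrow> ('o \<Rightarrow> 'a) \<Rightarrow> 'o \<Rightarrow> 'a set" where
  "Aut Hom cmp idt A = {g. is_iso Hom cmp idt A A g}"

definition strict_epi :: "('o \<Rightarrow> 'o \<Rightarrow> 'a set) \<Rightarrow> ('a \<Rightarrow> 'a \<Rightarrow> 'a) \<Rightarrow> 'o \<Rightarrow> 'o \<Rightarrow> 'a \<Rightarrow> bool" where
  "strict_epi Hom cmp X Y f \<longleftrightarrow> f \<in> Hom X Y \<and>
     (\<forall>Z g. g \<in> Hom X Z \<longrightarrow>
        (\<forall>C u v. u \<in> Hom C X \<longrightarrow> v \<in> Hom C X \<longrightarrow> cmp f u = cmp f v \<longrightarrow> cmp g u = cmp g v) \<longrightarrow>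
        (\<exists>!k. k \<in> Hom Y Z \<and> g = cmp k f))"

definition aut_subgroup :: "('o \<Rightarrow> 'o \<Rightarrow> 'a set) \<Rightarrow> ('a \<Rightarrow> 'a \<Rightarrow> 'a) \<Rightarrow> ('o \<Rightarrow> 'a) \<Rightarrow> 'o \<Rightarrow> 'a set \<Rightarrow> bool" where
  "aut_subgroup Hom cmp idt A H \<longleftrightarrow> H \<subseteq> Aut Hom cmp idt A \<and> idt A \<in> H \<and>
     (\<forall>g\<in>H. \<forall>h\<in>H. cmp g h \<in> H) \<and>
     (\<forall>g\<in>H. \<exists>h\<in>H. cmp h g = idt A \<and> cmp g h = idt A)"

definition is_quotient :: "('o \<Rightarrow> 'o \<Rightarrow> 'a set) \<Rightarrow> ('a \<Rightarrow> 'a \<Rightarrow> 'a) \<Rightarrow> 'o \<Rightarrow> 'a set \<Rightarrow> 'a \<Rightarrow> 'o \<Rightarrow> bool" where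
  "is_quotient Hom cmp A H q Q \<longleftrightarrow> q \<in> Hom A Q \<and> (\<forall>h\<in>H. cmp q h = q) \<and>
     (\<forall>Z g. g \<in> Hom A Z \<longrightarrow> (\<forall>h\<in>H. cmp g h = g) \<longrightarrow> (\<exists>!k. k \<in> Hom Q Z \<and> g = cmp k q))"

definition RC0 :: "('o \<Rightarrow> 'o \<Rightarrow> 'a set) \<Rightarrow> ('a \<Rightarrow> 'a \<Rightarrow> 'a) \<Rightarrow> 'o \<Rightarrow> bool" where
  "RC0 Hom cmp A \<longleftrightarrow> (\<forall>X. Hom A X \<noteq> {} \<and> (\<forall>f \<in> Hom A X. strict_epi Hom cmp A X f))"

definition RC1 :: "('o \<Rightarrow> 'o \<Rightarrow> 'a set) \<Rightarrow> ('a \<Rightarrow> 'a \<Rightarrow> 'a) \<Rightarrow> ('o \<Rightarrow> 'a) \<Rightarrow> 'o \<Rightarrow> bool" where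
  "RC1 Hom cmp idt A \<longleftrightarrow> (\<forall>H. aut_subgroup Hom cmp idt A H \<longrightarrow>
     (\<exists>q Q. is_quotient Hom cmp A H q Q \<and>
        (\<forall>f' \<in> Hom A Q. \<exists>f \<in> Hom A A. f' = cmp q f) \<and>
        (\<forall>f \<in> Hom A A. \<forall>g \<in> Hom A A. cmp q f = cmp q g \<longleftrightarrow> (\<exists>h\<in>H. f = cmp h g))))"

definition RC2 :: "('o \<Rightarrow> 'o \<Rightarrow> 'a set) \<Rightarrow> ('a \<Rightarrow> 'a \<Rightarrow> 'a) \<Rightarrow> ('o \<Rightarrow> 'a) \<Rightarrow> 'o \<Rightarrow> bool" where
  "RC2 Hom cmp idt A \<longleftrightarrow> Hom A A = Aut Hom cmp idt A"

text \<open>G = Aut(A)^op: the product g \<cdot> h in G is cmp h g.  A (left) G-set is a carrier E with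
  act g (act h x) = act (g \<cdot> h) x = act (cmp h g) x.  Transitive G-sets are nonempty.\<close>
definition tgset :: "('o \<Rightarrow> 'o \<Rightarrow> 'a set) \<Rightarrow> ('a \<Rightarrow> 'a \<Rightarrow> 'a) \<Rightarrow> ('o \<Rightarrow> 'a) \<Rightarrow> 'o \<Rightarrow>
    'e set \<Rightarrow> ('a \<Rightarrow> 'e \<Rightarrow> 'e) \<Rightarrow> bool" where
  "tgset Hom cmp idt A E act \<longleftrightarrow>
     (\<forall>g \<in> Aut Hom cmp idt A. \<forall>x\<in>E. act g x \<in> E) \<and>
     (\<forall>x\<in>E. act (idt A) x = x) \<and>
     (\<forall>g \<in> Aut Hom cmp idt A. \<forall>h \<in> Aut Hom cmp idt A. \<forall>x\<in>E. act g (act h x) = act (cmp h g) x) \<and>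
     E \<noteq> {} \<and>
     (\<forall>x\<in>E. \<forall>y\<in>E. \<exists>g \<in> Aut Hom cmp idt A. act g x = y)"

definition gmaps :: "('o \<Rightarrow> 'o \<Rightarrow> 'a set) \<Rightarrow> ('a \<Rightarrow> 'a \<Rightarrow> 'a) \<Rightarrow> ('o \<Rightarrow> 'a) \<Rightarrow> 'o \<Rightarrow>
    'e set \<Rightarrow> ('a \<Rightarrow> 'e \<Rightarrow> 'e) \<Rightarrow> 'f set \<Rightarrow> ('a \<Rightarrow> 'f \<Rightarrow> 'f) \<Rightarrow> ('e \<Rightarrow> 'f) set" where
  "gmaps Hom cmp idt A E act F act' =
     {\<phi> \<in> extensional E. \<phi> \<in> E \<rightarrow> F \<and>
        (\<forall>g \<in> Aut Hom cmp idt A. \<forall>x\<in>E. \<phi> (act g x) = act' g (\<phi> x))}"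

definition giso :: "('o \<Rightarrow> 'o \<Rightarrow> 'a set) \<Rightarrow> ('a \<Rightarrow> 'a \<Rightarrow> 'a) \<Rightarrow> ('o \<Rightarrow> 'a) \<Rightarrow> 'o \<Rightarrow>
    'e set \<Rightarrow> ('a \<Rightarrow> 'e \<Rightarrow> 'e) \<Rightarrow> 'f set \<Rightarrow> ('a \<Rightarrow> 'f \<Rightarrow> 'f) \<Rightarrow> ('e \<Rightarrow> 'f) \<Rightarrow> bool" where
  "giso Hom cmp idt A E act F act' \<phi> \<longleftrightarrow>
     \<phi> \<in> gmaps Hom cmp idt A E act F act' \<and> bij_betw \<phi> E F"

definition hact :: "('a \<Rightarrow> 'a \<Rightarrow> 'a) \<Rightarrow> 'a \<Rightarrow> 'a \<Rightarrow> 'a" where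
  "hact cmp g x = cmp x g"

definition Fix :: "('o \<Rightarrow> 'o \<Rightarrow> 'a set) \<Rightarrow> ('a \<Rightarrow> 'a \<Rightarrow> 'a) \<Rightarrow> ('o \<Rightarrow> 'a) \<Rightarrow> 'o \<Rightarrow>
    ('a \<Rightarrow> 'e \<Rightarrow> 'e) \<Rightarrow> 'e \<Rightarrow> 'a set" where
  "Fix Hom cmp idt A act x0 = {g \<in> Aut Hom cmp idt A. act g x0 = x0}"

end

theory Submission
  imports Defs
begin

text \<open>Everything is controlled by stabilisers. For arrows \<open>f : A \<rightarrow> X\<close> and \<open>g : A \<rightarrow> Z\<close>,
  \<open>g\<close> factors uniquely through \<open>f\<close> as soon as \<open>Fix f \<subseteq> Fix g\<close>: by RC0 the compatibility
  condition of a strict epimorphism only has to be tested on endomorphisms of \<open>A\<close>, which are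
  automorphisms by RC2, and for these \<open>f \<circ> a = f \<circ> b\<close> says that \<open>a \<circ> b\<^sup>-\<^sup>1 \<in> Fix f\<close>.
  So arrows out of \<open>A\<close> with the same stabiliser differ by a unique isomorphism, and by RC1 a
  quotient \<open>A \<rightarrow> A/H\<close> has stabiliser exactly \<open>H\<close>. This yields the counit
  \<open>A/Fix x \<cong> X\<close>, transitivity of \<open>[A,X]\<close> (transported from the RC1 quotient along the
  counit), and the unit \<open>E \<cong> [A, A/Fix x0]\<close>, since transitive \<open>G\<close>-sets with points of equal
  stabiliser are isomorphic. An equivariant map out of a transitive \<open>G\<close>-set is determined by one
  value, so full faithfulness and the adjunction bijection reduce to the factorisation property.\<close>

text \<open>Transitivity of \<open>[A,X]\<close> is itself a consequence of the stabiliser calculus, so the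
  latter is developed for actions that need not be transitive.\<close>

definition gset :: "('o \<Rightarrow> 'o \<Rightarrow> 'a set) \<Rightarrow> ('a \<Rightarrow> 'a \<Rightarrow> 'a) \<Rightarrow> ('o \<Rightarrow> 'a) \<Rightarrow> 'o \<Rightarrow>
    'e set \<Rightarrow> ('a \<Rightarrow> 'e \<Rightarrow> 'e) \<Rightarrow> bool" where
  "gset Hom cmp idt A E act \<longleftrightarrow>
     (\<forall>g \<in> Aut Hom cmp idt A. \<forall>x\<in>E. act g x \<in> E) \<and>
     (\<forall>x\<in>E. act (idt A) x = x) \<and>
     (\<forall>g \<in> Aut Hom cmp idt A. \<forall>h \<in> Aut Hom cmp idt A. \<forall>x\<in>E. act g (act h x) = act (cmp h g) x)"

lemma tgset_iff_gset:
  "tgset Hom cmp idt A E act \<longleftrightarrow> gset Hom cmp idt A E act \<and> E \<noteq> {} \<and>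
     (\<forall>x\<in>E. \<forall>y\<in>E. \<exists>g \<in> Aut Hom cmp idt A. act g x = y)"
  unfolding tgset_def gset_def by blast

lemma tgset_imp_gset: "tgset Hom cmp idt A E act \<Longrightarrow> gset Hom cmp idt A E act"
  unfolding tgset_iff_gset by blast

lemma strict_epiD:
  assumes "strict_epi Hom cmp X Y f" and "g \<in> Hom X Z"
    and "\<And>C u v. u \<in> Hom C X \<Longrightarrow> v \<in> Hom C X \<Longrightarrow> cmp f u = cmp f v \<Longrightarrow> cmp g u = cmp g v"
  shows "\<exists>!k. k \<in> Hom Y Z \<and> g = cmp k f"
  using assms unfolding strict_epi_def by blast

locale aut_action =
  fixes Hom :: "'o \<Rightarrow> 'o \<Rightarrow> 'a set" and cmp :: "'a \<Rightarrow> 'a \<Rightarrow> 'a" and idt :: "'o \<Rightarrow> 'a"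
    and A :: 'o
  assumes category: "category Hom cmp idt"
begin

abbreviation G :: "'a set" where "G \<equiv> Aut Hom cmp idt A"

lemma comp_in_Hom: "f \<in> Hom X Y \<Longrightarrow> g \<in> Hom Y Z \<Longrightarrow> cmp g f \<in> Hom X Z"
  using category unfolding category_def by blast

lemma idt_in_Hom: "idt X \<in> Hom X X"
  using category unfolding category_def by simp

lemma comp_idt_left: "f \<in> Hom X Y \<Longrightarrow> cmp (idt Y) f = f"
  using category unfolding category_def by blast

lemma comp_idt_right: "f \<in> Hom X Y \<Longrightarrow> cmp f (idt X) = f"
  using category unfolding category_def by blast

lemma comp_assoc:
  "f \<in> Hom W X \<Longrightarrow> g \<in> Hom X Y \<Longrightarrow> h \<in> Hom Y Z \<Longrightarrow> cmp h (cmp g f) = cmp (cmp h g) f"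
  using category unfolding category_def by blast

lemma Aut_subset_Hom: "G \<subseteq> Hom A A"
  unfolding Aut_def is_iso_def by blast

lemma idt_in_Aut: "idt A \<in> G"
  unfolding Aut_def is_iso_def using idt_in_Hom comp_idt_left by blast

lemma Aut_inverse:
  assumes "g \<in> G"
  obtains g' where "g' \<in> G" "cmp g' g = idt A" "cmp g g' = idt A"
  using assms unfolding Aut_def is_iso_def by blast

lemma comp_in_Aut:
  assumes g: "g \<in> G" and h: "h \<in> G"
  shows "cmp g h \<in> G"
proof -
  obtain g' where g': "g' \<in> G" "cmp g' g = idt A" "cmp g g' = idt A" using Aut_inverse g .
  obtain h' where h': "h' \<in> G" "cmp h' h = idt A" "cmp h h' = idt A" using Aut_inverse h .
  have Hom: "g \<in> Hom A A" "h \<in> Hom A A" "g' \<in> Hom A A" "h' \<in> Hom A A"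
    using g h g' h' Aut_subset_Hom by blast+
  have "cmp (cmp h' g') (cmp g h) = cmp h' (cmp g' (cmp g h))"
    using comp_assoc[OF comp_in_Hom[OF Hom(2,1)] Hom(3,4)] by simp
  also have "\<dots> = cmp h' h"
    using comp_assoc[OF Hom(2,1,3)] g'(2) comp_idt_left[OF Hom(2)] by simp
  finally have left: "cmp (cmp h' g') (cmp g h) = idt A" using h'(2) by simp
  have "cmp (cmp g h) (cmp h' g') = cmp g (cmp h (cmp h' g'))"
    using comp_assoc[OF comp_in_Hom[OF Hom(3,4)] Hom(2,1)] by simp
  also have "\<dots> = cmp g g'"
    using comp_assoc[OF Hom(3,4,2)] h'(3) comp_idt_left[OF Hom(3)] by simp
  finally have right: "cmp (cmp g h) (cmp h' g') = idt A" using g'(3) by simp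
  show ?thesis
    unfolding Aut_def is_iso_def using Hom comp_in_Hom left right by blast
qed

lemma gset_Hom: "gset Hom cmp idt A (Hom A X) (hact cmp)"
  unfolding gset_def hact_def
proof (intro conjI ballI)
  fix g h x assume "g \<in> G" "h \<in> G" "x \<in> Hom A X"
  then show "cmp (cmp x h) g = cmp x (cmp h g)"
    using Aut_subset_Hom comp_assoc by (metis subsetD)
qed (use Aut_subset_Hom comp_in_Hom comp_idt_right in blast)+

context
  fixes E :: "'e set" and act :: "'a \<Rightarrow> 'e \<Rightarrow> 'e"
  assumes gset: "gset Hom cmp idt A E act"
begin

lemma act_closed: "g \<in> G \<Longrightarrow> x \<in> E \<Longrightarrow> act g x \<in> E"
  using gset unfolding gset_def by blast

lemma act_idt: "x \<in> E \<Longrightarrow> act (idt A) x = x"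
  using gset unfolding gset_def by blast

lemma act_comp: "g \<in> G \<Longrightarrow> h \<in> G \<Longrightarrow> x \<in> E \<Longrightarrow> act g (act h x) = act (cmp h g) x"
  using gset unfolding gset_def by blast

lemma aut_subgroup_Fix:
  assumes x: "x \<in> E"
  shows "aut_subgroup Hom cmp idt A (Fix Hom cmp idt A act x)"
  unfolding aut_subgroup_def
proof (intro conjI ballI)
  show "Fix Hom cmp idt A act x \<subseteq> G" and "idt A \<in> Fix Hom cmp idt A act x"
    unfolding Fix_def using idt_in_Aut act_idt x by auto
next
  fix g h assume "g \<in> Fix Hom cmp idt A act x" "h \<in> Fix Hom cmp idt A act x"
  then have "g \<in> G" "h \<in> G" "act h (act g x) = x" unfolding Fix_def by auto
  then show "cmp g h \<in> Fix Hom cmp idt A act x"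
    unfolding Fix_def using comp_in_Aut act_comp[of h g x] x by simp
next
  fix g assume g: "g \<in> Fix Hom cmp idt A act x"
  then obtain g' where g': "g' \<in> G" "cmp g' g = idt A" "cmp g g' = idt A"
    using Aut_inverse unfolding Fix_def by blast
  have "act g' x = act g' (act g x)" using g unfolding Fix_def by simp
  also have "\<dots> = x" using act_comp[of g' g x] g g' act_idt x unfolding Fix_def by simp
  finally show "\<exists>h\<in>Fix Hom cmp idt A act x. cmp h g = idt A \<and> cmp g h = idt A"
    using g' unfolding Fix_def by blast
qed

lemma act_eq_iff_Fix_coset:
  assumes x: "x \<in> E" and g: "g \<in> G" and h: "h \<in> G"
  shows "act g x = act h x \<longleftrightarrow> (\<exists>u \<in> Fix Hom cmp idt A act x. g = cmp u h)"
proof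
  assume eq: "act g x = act h x"
  obtain h' where h': "h' \<in> G" "cmp h' h = idt A" "cmp h h' = idt A" using Aut_inverse h .
  have Hom: "g \<in> Hom A A" "h \<in> Hom A A" "h' \<in> Hom A A" using g h h' Aut_subset_Hom by blast+
  have "act (cmp g h') x = act h' (act h x)" using act_comp[OF h'(1) g x] eq by simp
  also have "\<dots> = x" using act_comp[OF h'(1) h x] h'(3) act_idt x by simp
  finally have "cmp g h' \<in> Fix Hom cmp idt A act x"
    unfolding Fix_def using comp_in_Aut g h' by blast
  moreover have "g = cmp (cmp g h') h"
    using comp_assoc[OF Hom(2,3,1)] h'(2) comp_idt_right[OF Hom(1)] by simp
  ultimately show "\<exists>u \<in> Fix Hom cmp idt A act x. g = cmp u h" ..
next
  assume "\<exists>u \<in> Fix Hom cmp idt A act x. g = cmp u h"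
  then obtain u where u: "u \<in> G" "act u x = x" and "g = cmp u h" unfolding Fix_def by blast
  then have "act g x = act h (act u x)" using act_comp[OF h u(1) x] by simp
  then show "act g x = act h x" using u(2) by simp
qed

end

lemma tgset_orbitE:
  assumes "tgset Hom cmp idt A E act" "x0 \<in> E" "e \<in> E"
  obtains g where "g \<in> G" "e = act g x0"
proof -
  obtain g where "g \<in> G" "act g x0 = e" using assms unfolding tgset_def by blast
  then show ?thesis using that by simp
qed

lemma gmaps_equivariant:
  "\<phi> \<in> gmaps Hom cmp idt A E act F act' \<Longrightarrow> g \<in> G \<Longrightarrow> x \<in> E \<Longrightarrow> \<phi> (act g x) = act' g (\<phi> x)"
  unfolding gmaps_def by blast

lemma gmaps_eqI:
  assumes E: "tgset Hom cmp idt A E act" and x0: "x0 \<in> E"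
    and \<phi>: "\<phi> \<in> gmaps Hom cmp idt A E act F act'" and \<psi>: "\<psi> \<in> gmaps Hom cmp idt A E act F act'"
    and eq: "\<phi> x0 = \<psi> x0"
  shows "\<phi> = \<psi>"
proof (rule extensionalityI)
  show "\<phi> \<in> extensional E" "\<psi> \<in> extensional E" using \<phi> \<psi> unfolding gmaps_def by blast+
next
  fix e assume "e \<in> E"
  then obtain g where "g \<in> G" "e = act g x0" using tgset_orbitE[OF E x0] by blast
  then show "\<phi> e = \<psi> e" using gmaps_equivariant[OF \<phi>] gmaps_equivariant[OF \<psi>] x0 eq by simp
qed

lemma Fix_subset_Fix_gmaps:
  "\<phi> \<in> gmaps Hom cmp idt A E act F act' \<Longrightarrow> x \<in> E \<Longrightarrow>
     Fix Hom cmp idt A act x \<subseteq> Fix Hom cmp idt A act' (\<phi> x)"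
  unfolding Fix_def using gmaps_equivariant by fastforce

lemma gmaps_ex_of_Fix_subset:
  assumes E: "tgset Hom cmp idt A E act" and F: "gset Hom cmp idt A F act'"
    and x0: "x0 \<in> E" and y0: "y0 \<in> F"
    and sub: "Fix Hom cmp idt A act x0 \<subseteq> Fix Hom cmp idt A act' y0"
  shows "\<exists>\<phi> \<in> gmaps Hom cmp idt A E act F act'. \<phi> x0 = y0"
proof -
  have gE: "gset Hom cmp idt A E act" using E by (rule tgset_imp_gset)
  define \<phi> where "\<phi> = (\<lambda>e\<in>E. act' (SOME g. g \<in> G \<and> act g x0 = e) y0)"
  have \<phi>_act: "\<phi> (act g x0) = act' g y0" if g: "g \<in> G" for g
  proof -
    define g' where "g' = (SOME g'. g' \<in> G \<and> act g' x0 = act g x0)"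
    have g': "g' \<in> G" "act g' x0 = act g x0"
      using someI[of "\<lambda>g'. g' \<in> G \<and> act g' x0 = act g x0" g] g unfolding g'_def by simp_all
    then obtain u where "u \<in> Fix Hom cmp idt A act x0" "g' = cmp u g"
      using act_eq_iff_Fix_coset[OF gE x0 g'(1) g] by blast
    then have "act' g' y0 = act' g y0"
      using act_eq_iff_Fix_coset[OF F y0 g'(1) g] sub by blast
    then show ?thesis unfolding \<phi>_def g'_def using act_closed[OF gE g x0] by simp
  qed
  have "\<phi> \<in> gmaps Hom cmp idt A E act F act'"
    unfolding gmaps_def
  proof (intro CollectI conjI ballI Pi_I)
    show "\<phi> \<in> extensional E" unfolding \<phi>_def by simp
  next
    fix e assume "e \<in> E"
    then obtain h where "h \<in> G" "e = act h x0" using tgset_orbitE[OF E x0] by blast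
    then show "\<phi> e \<in> F" using \<phi>_act act_closed[OF F _ y0] by simp
  next
    fix g e assume g: "g \<in> G" and "e \<in> E"
    then obtain h where h: "h \<in> G" "e = act h x0" using tgset_orbitE[OF E x0] by blast
    have "\<phi> (act g e) = act' (cmp h g) y0"
      using h act_comp[OF gE g h(1) x0] \<phi>_act comp_in_Aut[OF h(1) g] by simp
    also have "\<dots> = act' g (\<phi> e)" using h \<phi>_act act_comp[OF F g h(1) y0] by simp
    finally show "\<phi> (act g e) = act' g (\<phi> e)" .
  qed
  moreover have "\<phi> x0 = y0" using \<phi>_act[OF idt_in_Aut] act_idt[OF gE x0] act_idt[OF F y0] by simp
  ultimately show ?thesis by blast
qed

lemma giso_ex_of_Fix_eq:
  assumes E: "tgset Hom cmp idt A E act" and F: "tgset Hom cmp idt A F act'"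
    and x0: "x0 \<in> E" and y0: "y0 \<in> F"
    and eq: "Fix Hom cmp idt A act x0 = Fix Hom cmp idt A act' y0"
  shows "\<exists>\<phi>. giso Hom cmp idt A E act F act' \<phi> \<and> \<phi> x0 = y0"
proof -
  have gE: "gset Hom cmp idt A E act" using E by (rule tgset_imp_gset)
  have gF: "gset Hom cmp idt A F act'" using F by (rule tgset_imp_gset)
  obtain \<phi> where \<phi>: "\<phi> \<in> gmaps Hom cmp idt A E act F act'" "\<phi> x0 = y0"
    using gmaps_ex_of_Fix_subset[OF E gF x0 y0 equalityD1[OF eq]] by blast
  have \<phi>_act: "\<phi> (act g x0) = act' g y0" if "g \<in> G" for g
    using gmaps_equivariant[OF \<phi>(1) that x0] \<phi>(2) by simp
  have "inj_on \<phi> E"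
  proof (rule inj_onI)
    fix e e' assume "e \<in> E" "e' \<in> E" and eq\<phi>: "\<phi> e = \<phi> e'"
    obtain g where g: "g \<in> G" "e = act g x0" using tgset_orbitE[OF E x0 \<open>e \<in> E\<close>] .
    obtain h where h: "h \<in> G" "e' = act h x0" using tgset_orbitE[OF E x0 \<open>e' \<in> E\<close>] .
    have "act' g y0 = act' h y0" using eq\<phi> g h \<phi>_act by simp
    then show "e = e'"
      using act_eq_iff_Fix_coset[OF gF y0 g(1) h(1)] act_eq_iff_Fix_coset[OF gE x0 g(1) h(1)] eq g h
      by simp
  qed
  moreover have "\<phi> ` E = F"
  proof
    show "\<phi> ` E \<subseteq> F" using \<phi>(1) unfolding gmaps_def by blast
  next
    show "F \<subseteq> \<phi> ` E"
    proof
      fix y assume "y \<in> F"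
      then obtain g where g: "g \<in> G" "y = act' g y0" using tgset_orbitE[OF F y0] by blast
      then have "y = \<phi> (act g x0)" using \<phi>_act by simp
      then show "y \<in> \<phi> ` E" using act_closed[OF gE g(1) x0] by (rule image_eqI)
    qed
  qed
  ultimately show ?thesis unfolding giso_def bij_betw_def using \<phi> by blast
qed

lemma gmaps_restrict_id: "(\<lambda>x\<in>Hom A X. x) \<in> gmaps Hom cmp idt A (Hom A X) (hact cmp) (Hom A X) (hact cmp)"
  unfolding gmaps_def using act_closed[OF gset_Hom] by auto

lemma postcomp_in_gmaps:
  assumes E: "gset Hom cmp idt A E act"
    and \<psi>: "\<psi> \<in> gmaps Hom cmp idt A E act (Hom A Q) (hact cmp)" and k: "k \<in> Hom Q X"
  shows "(\<lambda>e\<in>E. cmp k (\<psi> e)) \<in> gmaps Hom cmp idt A E act (Hom A X) (hact cmp)"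
  unfolding gmaps_def
proof (intro CollectI conjI ballI Pi_I)
  have \<psi>_Hom: "\<psi> e \<in> Hom A Q" if "e \<in> E" for e
    using \<psi> that unfolding gmaps_def by blast
  show "(\<lambda>e\<in>E. cmp k (\<psi> e)) \<in> extensional E" by simp
  show "(\<lambda>e\<in>E. cmp k (\<psi> e)) e \<in> Hom A X" if "e \<in> E" for e
    using comp_in_Hom[OF \<psi>_Hom k] that by simp
  fix g e assume g: "g \<in> G" and e: "e \<in> E"
  have "g \<in> Hom A A" using g Aut_subset_Hom by blast
  then have "cmp k (\<psi> (act g e)) = cmp (cmp k (\<psi> e)) g"
    using gmaps_equivariant[OF \<psi> g e] comp_assoc[OF _ \<psi>_Hom[OF e] k] unfolding hact_def by simp
  then show "(\<lambda>e\<in>E. cmp k (\<psi> e)) (act g e) = hact cmp g ((\<lambda>e\<in>E. cmp k (\<psi> e)) e)"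
    using act_closed[OF E g e] e unfolding hact_def by simp
qed

end

locale rc_object = aut_action +
  assumes rc0: "RC0 Hom cmp A" and rc1: "RC1 Hom cmp idt A" and rc2: "RC2 Hom cmp idt A"
begin

lemma Aut_eq_Hom: "G = Hom A A"
  using rc2 unfolding RC2_def by simp

lemma Hom_from_A_nonempty: "Hom A X \<noteq> {}"
  using rc0 unfolding RC0_def by blast

lemma strict_epi_from_A: "f \<in> Hom A X \<Longrightarrow> strict_epi Hom cmp A X f"
  using rc0 unfolding RC0_def by blast

lemma epi_from_A:
  assumes f: "f \<in> Hom A X" and k: "k \<in> Hom X Z" and k': "k' \<in> Hom X Z"
    and eq: "cmp k f = cmp k' f"
  shows "k = k'"
proof -
  have "cmp (cmp k f) u = cmp (cmp k f) v"
    if "u \<in> Hom C A" "v \<in> Hom C A" "cmp f u = cmp f v" for C u v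
    using comp_assoc[OF that(1) f k] comp_assoc[OF that(2) f k] that(3) by simp
  then have "\<exists>!k''. k'' \<in> Hom X Z \<and> cmp k f = cmp k'' f"
    by (rule strict_epiD[OF strict_epi_from_A[OF f] comp_in_Hom[OF f k]])
  then show ?thesis using k k' eq by blast
qed

text \<open>Compatibility on an arbitrary object \<open>C\<close> is reduced to endomorphisms of \<open>A\<close> by
  precomposing with some \<open>a : A \<rightarrow> C\<close>, which is epi by RC0.\<close>

lemma factor_through_of_Fix_subset:
  assumes f: "f \<in> Hom A X" and g: "g \<in> Hom A Z"
    and sub: "Fix Hom cmp idt A (hact cmp) f \<subseteq> Fix Hom cmp idt A (hact cmp) g"
  shows "\<exists>k \<in> Hom X Z. g = cmp k f"
proof -
  have compat: "cmp g u = cmp g v"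
    if u: "u \<in> Hom C A" and v: "v \<in> Hom C A" and eq: "cmp f u = cmp f v" for C u v
  proof -
    obtain a where a: "a \<in> Hom A C" using Hom_from_A_nonempty by blast
    have ua: "cmp u a \<in> G" and va: "cmp v a \<in> G"
      using comp_in_Hom[OF a u] comp_in_Hom[OF a v] Aut_eq_Hom by simp_all
    have "hact cmp (cmp u a) f = hact cmp (cmp v a) f"
      unfolding hact_def using comp_assoc[OF a u f] comp_assoc[OF a v f] eq by simp
    then have "hact cmp (cmp u a) g = hact cmp (cmp v a) g"
      using act_eq_iff_Fix_coset[OF gset_Hom f ua va] act_eq_iff_Fix_coset[OF gset_Hom g ua va] sub
      by blast
    then have "cmp (cmp g u) a = cmp (cmp g v) a"
      unfolding hact_def using comp_assoc[OF a u g] comp_assoc[OF a v g] by simp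
    then show ?thesis using epi_from_A[OF a comp_in_Hom[OF u g] comp_in_Hom[OF v g]] by blast
  qed
  then have "\<exists>!k. k \<in> Hom X Z \<and> g = cmp k f"
    by (rule strict_epiD[OF strict_epi_from_A[OF f] g])
  then show ?thesis by blast
qed

lemma iso_of_Fix_eq:
  assumes f: "f \<in> Hom A X" and g: "g \<in> Hom A Y"
    and eq: "Fix Hom cmp idt A (hact cmp) f = Fix Hom cmp idt A (hact cmp) g"
  shows "\<exists>k. is_iso Hom cmp idt X Y k \<and> cmp k f = g"
proof -
  obtain k where k: "k \<in> Hom X Y" "g = cmp k f"
    using factor_through_of_Fix_subset[OF f g equalityD1[OF eq]] by blast
  obtain m where m: "m \<in> Hom Y X" "f = cmp m g"
    using factor_through_of_Fix_subset[OF g f equalityD2[OF eq]] by blast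
  have "cmp (cmp m k) f = cmp m g" using comp_assoc[OF f k(1) m(1)] k(2) by simp
  then have "cmp (cmp m k) f = cmp (idt X) f" using m(2) comp_idt_left[OF f] by simp
  then have mk: "cmp m k = idt X"
    using epi_from_A[OF f comp_in_Hom[OF k(1) m(1)] idt_in_Hom] by blast
  have "cmp (cmp k m) g = cmp k f" using comp_assoc[OF g m(1) k(1)] m(2) by simp
  then have "cmp (cmp k m) g = cmp (idt Y) g" using k(2) comp_idt_left[OF g] by simp
  then have km: "cmp k m = idt Y"
    using epi_from_A[OF g comp_in_Hom[OF m(1) k(1)] idt_in_Hom] by blast
  show ?thesis unfolding is_iso_def using k m mk km by blast
qed

lemma quotient_exists:
  "aut_subgroup Hom cmp idt A H \<Longrightarrow> \<exists>q Q. is_quotient Hom cmp A H q Q"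
  using rc1 unfolding RC1_def by blast

text \<open>The RC1 quotient has stabiliser \<open>H\<close>, and every other quotient by \<open>H\<close> factors it.\<close>

lemma Fix_quotient:
  assumes H: "aut_subgroup Hom cmp idt A H" and q: "is_quotient Hom cmp A H q Q"
  shows "Fix Hom cmp idt A (hact cmp) q = H"
proof
  show "H \<subseteq> Fix Hom cmp idt A (hact cmp) q"
    using H q unfolding aut_subgroup_def is_quotient_def Fix_def hact_def by blast
next
  obtain q1 Q1 where q1: "is_quotient Hom cmp A H q1 Q1"
    and rel: "\<forall>f\<in>Hom A A. \<forall>g\<in>Hom A A. cmp q1 f = cmp q1 g \<longleftrightarrow> (\<exists>h\<in>H. f = cmp h g)"
    using rc1 H unfolding RC1_def by blast
  have q1_Hom: "q1 \<in> Hom A Q1" and q1_inv: "\<forall>h\<in>H. cmp q1 h = q1"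
    using q1 unfolding is_quotient_def by blast+
  have q_Hom: "q \<in> Hom A Q" using q unfolding is_quotient_def by blast
  obtain k where k: "k \<in> Hom Q Q1" "q1 = cmp k q"
    using q q1_Hom q1_inv unfolding is_quotient_def by blast
  show "Fix Hom cmp idt A (hact cmp) q \<subseteq> H"
  proof
    fix g assume "g \<in> Fix Hom cmp idt A (hact cmp) q"
    then have g: "g \<in> Hom A A" "cmp q g = q" unfolding Fix_def hact_def Aut_eq_Hom by auto
    have "cmp q1 g = cmp q1 (idt A)"
      using comp_assoc[OF g(1) q_Hom k(1)] k(2) g(2) comp_idt_right[OF q1_Hom] by simp
    then obtain h where "h \<in> H" "g = cmp h (idt A)" using rel g(1) idt_in_Hom by blast
    then show "g \<in> H"
      using H comp_idt_right unfolding aut_subgroup_def Aut_eq_Hom by auto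
  qed
qed

lemma counit_iso:
  assumes x: "x \<in> Hom A X" and q: "is_quotient Hom cmp A (Fix Hom cmp idt A (hact cmp) x) q Q"
  shows "\<exists>k. is_iso Hom cmp idt Q X k \<and> cmp k q = x"
proof -
  have "Fix Hom cmp idt A (hact cmp) q = Fix Hom cmp idt A (hact cmp) x"
    using Fix_quotient[OF aut_subgroup_Fix[OF gset_Hom x] q] .
  moreover have "q \<in> Hom A Q" using q unfolding is_quotient_def by blast
  ultimately show ?thesis using iso_of_Fix_eq x by blast
qed

lemma tgset_Hom: "tgset Hom cmp idt A (Hom A X) (hact cmp)"
  unfolding tgset_iff_gset
proof (intro conjI ballI)
  show "gset Hom cmp idt A (Hom A X) (hact cmp)" by (rule gset_Hom)
  show "Hom A X \<noteq> {}" by (rule Hom_from_A_nonempty)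
next
  fix x y assume x: "x \<in> Hom A X" and y: "y \<in> Hom A X"
  obtain q Q where q: "is_quotient Hom cmp A (Fix Hom cmp idt A (hact cmp) x) q Q"
    and onto: "\<forall>f' \<in> Hom A Q. \<exists>f \<in> Hom A A. f' = cmp q f"
    using rc1 aut_subgroup_Fix[OF gset_Hom x] unfolding RC1_def by blast
  have q_Hom: "q \<in> Hom A Q" using q unfolding is_quotient_def by blast
  obtain k where k: "is_iso Hom cmp idt Q X k" "cmp k q = x" using counit_iso[OF x q] by blast
  then obtain m where k_Hom: "k \<in> Hom Q X" and m: "m \<in> Hom X Q" "cmp k m = idt X"
    unfolding is_iso_def by blast
  obtain f where f: "f \<in> Hom A A" "cmp m y = cmp q f"
    using onto comp_in_Hom[OF y m(1)] by blast
  have "y = cmp (cmp k m) y" using m(2) comp_idt_left[OF y] by simp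
  also have "\<dots> = cmp k (cmp q f)" using comp_assoc[OF y m(1) k_Hom] f(2) by simp
  also have "\<dots> = cmp x f" using comp_assoc[OF f(1) q_Hom k_Hom] k(2) by simp
  finally show "\<exists>g \<in> G. hact cmp g x = y" unfolding hact_def Aut_eq_Hom using f(1) by blast
qed

lemma Hom_fully_faithful:
  "bij_betw (\<lambda>f. \<lambda>x\<in>Hom A X. cmp f x) (Hom X Y)
     (gmaps Hom cmp idt A (Hom A X) (hact cmp) (Hom A Y) (hact cmp))"
proof -
  obtain x0 where x0: "x0 \<in> Hom A X" using Hom_from_A_nonempty by blast
  have postcomp: "(\<lambda>x\<in>Hom A X. cmp f x) \<in> gmaps Hom cmp idt A (Hom A X) (hact cmp) (Hom A Y) (hact cmp)"
    if f: "f \<in> Hom X Y" for f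
  proof -
    have "(\<lambda>x\<in>Hom A X. cmp f ((\<lambda>x\<in>Hom A X. x) x)) = (\<lambda>x\<in>Hom A X. cmp f x)"
      by (rule restrict_ext) simp
    then show ?thesis using postcomp_in_gmaps[OF gset_Hom gmaps_restrict_id f] by simp
  qed
  have "inj_on (\<lambda>f. \<lambda>x\<in>Hom A X. cmp f x) (Hom X Y)"
  proof (rule inj_onI)
    fix f f' assume f: "f \<in> Hom X Y" and f': "f' \<in> Hom X Y"
      and eq: "(\<lambda>x\<in>Hom A X. cmp f x) = (\<lambda>x\<in>Hom A X. cmp f' x)"
    have "cmp f x0 = cmp f' x0" using fun_cong[OF eq, of x0] x0 by simp
    then show "f = f'" using epi_from_A[OF x0 f f'] by blast
  qed
  moreover have "gmaps Hom cmp idt A (Hom A X) (hact cmp) (Hom A Y) (hact cmp)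
      \<subseteq> (\<lambda>f. \<lambda>x\<in>Hom A X. cmp f x) ` Hom X Y"
  proof
    fix \<phi> assume \<phi>: "\<phi> \<in> gmaps Hom cmp idt A (Hom A X) (hact cmp) (Hom A Y) (hact cmp)"
    have "\<phi> x0 \<in> Hom A Y" using \<phi> x0 unfolding gmaps_def by blast
    then obtain f where f: "f \<in> Hom X Y" "\<phi> x0 = cmp f x0"
      using factor_through_of_Fix_subset[OF x0 _ Fix_subset_Fix_gmaps[OF \<phi> x0]] by blast
    have "\<phi> = (\<lambda>x\<in>Hom A X. cmp f x)"
      using gmaps_eqI[OF tgset_Hom x0 \<phi> postcomp[OF f(1)]] f(2) x0 by simp
    then show "\<phi> \<in> (\<lambda>f. \<lambda>x\<in>Hom A X. cmp f x) ` Hom X Y" using f(1) by blast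
  qed
  ultimately show ?thesis unfolding bij_betw_def using postcomp by blast
qed

lemma adjunction_bij:
  assumes E: "tgset Hom cmp idt A E act" and x0: "x0 \<in> E"
    and q: "is_quotient Hom cmp A (Fix Hom cmp idt A act x0) q Q"
    and \<eta>: "\<eta> \<in> gmaps Hom cmp idt A E act (Hom A Q) (hact cmp)" and \<eta>_x0: "\<eta> x0 = q"
  shows "bij_betw (\<lambda>k. \<lambda>e\<in>E. cmp k (\<eta> e)) (Hom Q X) (gmaps Hom cmp idt A E act (Hom A X) (hact cmp))"
proof -
  have q_Hom: "q \<in> Hom A Q" using q unfolding is_quotient_def by blast
  note postcomp = postcomp_in_gmaps[OF tgset_imp_gset[OF E] \<eta>]
  have "inj_on (\<lambda>k. \<lambda>e\<in>E. cmp k (\<eta> e)) (Hom Q X)"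
  proof (rule inj_onI)
    fix k k' assume k: "k \<in> Hom Q X" and k': "k' \<in> Hom Q X"
      and eq: "(\<lambda>e\<in>E. cmp k (\<eta> e)) = (\<lambda>e\<in>E. cmp k' (\<eta> e))"
    have "cmp k q = cmp k' q" using fun_cong[OF eq, of x0] x0 \<eta>_x0 by simp
    then show "k = k'" using epi_from_A[OF q_Hom k k'] by blast
  qed
  moreover have "gmaps Hom cmp idt A E act (Hom A X) (hact cmp) \<subseteq> (\<lambda>k. \<lambda>e\<in>E. cmp k (\<eta> e)) ` Hom Q X"
  proof
    fix \<phi> assume \<phi>: "\<phi> \<in> gmaps Hom cmp idt A E act (Hom A X) (hact cmp)"
    have "\<phi> x0 \<in> Hom A X" using \<phi> x0 unfolding gmaps_def by blast
    moreover have "\<forall>h \<in> Fix Hom cmp idt A act x0. cmp (\<phi> x0) h = \<phi> x0"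
      using Fix_subset_Fix_gmaps[OF \<phi> x0] unfolding Fix_def hact_def by blast
    ultimately obtain k where k: "k \<in> Hom Q X" "\<phi> x0 = cmp k q"
      using q unfolding is_quotient_def by blast
    have "\<phi> = (\<lambda>e\<in>E. cmp k (\<eta> e))"
      using gmaps_eqI[OF E x0 \<phi> postcomp[OF k(1)]] k(2) x0 \<eta>_x0 by simp
    then show "\<phi> \<in> (\<lambda>k. \<lambda>e\<in>E. cmp k (\<eta> e)) ` Hom Q X" using k(1) by blast
  qed
  ultimately show ?thesis unfolding bij_betw_def using postcomp by blast
qed

lemma unit_giso:
  assumes E: "tgset Hom cmp idt A E act" and x0: "x0 \<in> E"
    and q: "is_quotient Hom cmp A (Fix Hom cmp idt A act x0) q Q"
  shows "\<exists>\<eta>. giso Hom cmp idt A E act (Hom A Q) (hact cmp) \<eta> \<and> \<eta> x0 = q"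
proof -
  have "Fix Hom cmp idt A act x0 = Fix Hom cmp idt A (hact cmp) q"
    using Fix_quotient[OF aut_subgroup_Fix[OF tgset_imp_gset[OF E] x0] q] by simp
  moreover have "q \<in> Hom A Q" using q unfolding is_quotient_def by blast
  ultimately show ?thesis using giso_ex_of_Fix_eq[OF E tgset_Hom x0] by blast
qed

lemma unit_adjunction:
  assumes E: "tgset Hom cmp idt A E act" and x0: "x0 \<in> E"
    and q: "is_quotient Hom cmp A (Fix Hom cmp idt A act x0) q Q"
  shows "\<exists>\<eta>. giso Hom cmp idt A E act (Hom A Q) (hact cmp) \<eta> \<and>
           (\<forall>g \<in> G. \<eta> (act g x0) = cmp q g) \<and>
           (\<forall>X. bij_betw (\<lambda>k. \<lambda>e\<in>E. cmp k (\<eta> e)) (Hom Q X)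
                  (gmaps Hom cmp idt A E act (Hom A X) (hact cmp)))"
proof -
  obtain \<eta> where \<eta>: "giso Hom cmp idt A E act (Hom A Q) (hact cmp) \<eta>" "\<eta> x0 = q"
    using unit_giso[OF E x0 q] by blast
  then have \<eta>_gmaps: "\<eta> \<in> gmaps Hom cmp idt A E act (Hom A Q) (hact cmp)"
    unfolding giso_def by blast
  have "\<forall>g \<in> G. \<eta> (act g x0) = cmp q g"
    using gmaps_equivariant[OF \<eta>_gmaps _ x0] \<eta>(2) unfolding hact_def by simp
  then show ?thesis using \<eta>(1) adjunction_bij[OF E x0 q \<eta>_gmaps \<eta>(2)] by blast
qed

end

theorem theorem2p11:
  fixes Hom :: "'o \<Rightarrow> 'o \<Rightarrow> 'a set" and cmp :: "'a \<Rightarrow> 'a \<Rightarrow> 'a" and idt :: "'o \<Rightarrow> 'a"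
    and A :: 'o
  assumes cat: "category Hom cmp idt"
    and rc0: "RC0 Hom cmp A"
    and rc1: "RC1 Hom cmp idt A"
    and rc2: "RC2 Hom cmp idt A"
  shows
    \<comment> \<open>[A,X] with g \<cdot> x = x \<circ> g is a transitive G-set\<close>
    "(\<forall>X. tgset Hom cmp idt A (Hom A X) (hact cmp))
     \<comment> \<open>[A,-]_G on arrows, and it is fully faithful\<close>
     \<and> (\<forall>X Y. bij_betw (\<lambda>f. \<lambda>x\<in>Hom A X. cmp f x) (Hom X Y)
                 (gmaps Hom cmp idt A (Hom A X) (hact cmp) (Hom A Y) (hact cmp)))
     \<comment> \<open>left adjoint A \<times>_G E = A/Fix(x0): unit E \<rightarrow> [A,A/H] is an iso, with the adjunction bijection\<close>
     \<and> (\<forall>(E :: 'e set) act x0. tgset Hom cmp idt A E act \<longrightarrow> x0 \<in> E \<longrightarrow>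
          (\<exists>q Q. is_quotient Hom cmp A (Fix Hom cmp idt A act x0) q Q) \<and>
          (\<forall>q Q. is_quotient Hom cmp A (Fix Hom cmp idt A act x0) q Q \<longrightarrow>
             (\<exists>\<eta>. giso Hom cmp idt A E act (Hom A Q) (hact cmp) \<eta> \<and>
                 (\<forall>g \<in> Aut Hom cmp idt A. \<eta> (act g x0) = cmp q g) \<and>
                 (\<forall>X. bij_betw (\<lambda>k. \<lambda>e\<in>E. cmp k (\<eta> e)) (Hom Q X)
                        (gmaps Hom cmp idt A E act (Hom A X) (hact cmp))))))
     \<comment> \<open>counit A/Fix(x) \<rightarrow> X is an isomorphism\<close>
     \<and> (\<forall>X x. x \<in> Hom A X \<longrightarrow>
          (\<forall>q Q. is_quotient Hom cmp A (Fix Hom cmp idt A (hact cmp) x) q Q \<longrightarrow>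
             (\<exists>k. is_iso Hom cmp idt Q X k \<and> cmp k q = x)))"
proof -
  interpret rc_object Hom cmp idt A using assms by unfold_locales
  show ?thesis
  proof (intro conjI allI impI)
    fix E :: "'e set" and act x0 assume E: "tgset Hom cmp idt A E act" and x0: "x0 \<in> E"
    show "\<exists>q Q. is_quotient Hom cmp A (Fix Hom cmp idt A act x0) q Q"
      using quotient_exists[OF aut_subgroup_Fix[OF tgset_imp_gset[OF E] x0]] .
    fix q Q assume "is_quotient Hom cmp A (Fix Hom cmp idt A act x0) q Q"
    from unit_adjunction[OF E x0 this] show "\<exists>\<eta>. giso Hom cmp idt A E act (Hom A Q) (hact cmp) \<eta> \<and>
        (\<forall>g \<in> Aut Hom cmp idt A. \<eta> (act g x0) = cmp q g) \<and>
        (\<forall>X. bij_betw (\<lambda>k. \<lambda>e\<in>E. cmp k (\<eta> e)) (Hom Q X)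
               (gmaps Hom cmp idt A E act (Hom A X) (hact cmp)))" .
  qed (use tgset_Hom Hom_fully_faithful counit_iso in blast)+
qed

end
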